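(* Let $p$ be a prime and $G$ a non-abelian group of order $p^m$ with $|Z(G)|=p^{m-2}$. Then $\mathrm{Spec}(\Gamma_G)=\{[0]^{(p+1)((p-1)p^{m-3}-1)},[-(p-1)p^{m-3}]^{p},[(p-1)p^{m-2}]^1\}$, $\mathrm{L\text{-}Spec}(\Gamma_G)=\{[0]^1,[(p-1)p^{m-2}]^{(p+1)((p-1)p^{m-3}-1)},[(p^2-1)p^{m-3}]^{p}\}$, $\mathrm{Q\text{-}Spec}(\Gamma_G)=\{[(p-1)p^{m-2}]^{(p+1)((p-1)p^{m-3}-1)},[(p-1)^2p^{m-3}]^{p},[2(p-1)p^{m-2}]^1\}$, and $E(\Gamma_G)=LE(\Gamma_G)=SE(\Gamma_G)=2(p-1)p^{m-2}$.
   Context: For a finite non-abelian group $G$ with center $Z(G)$ and $x\in G$, $x^G$ is the conjugacy class of $x$. The NCCC-graph $\Gamma_G$ is the simple graph with vertex set $\{x^G: x\in G\setminus Z(G)\}$, distinct vertices $x^G,y^G$ adjacent iff $x'y'\neq y'x'$ for all $x'\in x^G,y'\in y^G$. For a simple graph with adjacency matrix $A$, degree matrix $D$, $L=D-A$, $Q=D+A$; Spec, L-Spec, Q-Spec are the eigenvalue multisets of $A,L,Q$, written with $[\lambda]^k$ meaning eigenvalue $\lambda$ of multiplicity $k$. $E=\sum_{\lambda\in\mathrm{Spec}}|\lambda|$; with $\Delta=2|E(\mathcal G)|/|V(\mathcal G)|$, $LE=\sum_{\beta\in\mathrm{L\text{-}Spec}}|\beta-\Delta|$, $SE=\sum_{\gamma\in\mathrm{Q\text{-}Spec}}|\gamma-\Delta|$.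 *)

theory Defs
  imports "HOL-Algebra.Group" "Jordan_Normal_Form.Char_Poly"
begin

definition grp_center :: "('a, 'b) monoid_scheme \<Rightarrow> 'a set" where
  "grp_center G = {z \<in> carrier G. \<forall>g \<in> carrier G. z \<otimes>\<^bsub>G\<^esub> g = g \<otimes>\<^bsub>G\<^esub> z}"

definition conj_class :: "('a, 'b) monoid_scheme \<Rightarrow> 'a \<Rightarrow> 'a set" where
  "conj_class G x = {g \<otimes>\<^bsub>G\<^esub> x \<otimes>\<^bsub>G\<^esub> inv\<^bsub>G\<^esub> g | g. g \<in> carrier G}"

definition nccc_vertices :: "('a, 'b) monoid_scheme \<Rightarrow> 'a set set" where
  "nccc_vertices G = {conj_class G x | x. x \<in> carrier G - grp_center G}"

definition nccc_adj :: "('a, 'b) monoid_scheme \<Rightarrow> 'a set \<Rightarrow> 'a set \<Rightarrow> bool" where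
  "nccc_adj G X Y \<longleftrightarrow> X \<noteq> Y \<and>
     (\<forall>x \<in> X. \<forall>y \<in> Y. x \<otimes>\<^bsub>G\<^esub> y \<noteq> y \<otimes>\<^bsub>G\<^esub> x)"

text \<open>A fixed (arbitrary) enumeration of the vertex set; spectra do not depend on it.\<close>
definition vertex_enum :: "'v set \<Rightarrow> nat \<Rightarrow> 'v" where
  "vertex_enum V = (SOME f. bij_betw f {..<card V} V)"

definition graph_degree :: "'v set \<Rightarrow> ('v \<Rightarrow> 'v \<Rightarrow> bool) \<Rightarrow> 'v \<Rightarrow> nat" where
  "graph_degree V E v = card {w \<in> V. E v w}"

definition adj_mat :: "'v set \<Rightarrow> ('v \<Rightarrow> 'v \<Rightarrow> bool) \<Rightarrow> real mat" where
  "adj_mat V E = mat (card V) (card V)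
     (\<lambda>(i, j). if E (vertex_enum V i) (vertex_enum V j) then 1 else 0)"

definition deg_mat :: "'v set \<Rightarrow> ('v \<Rightarrow> 'v \<Rightarrow> bool) \<Rightarrow> real mat" where
  "deg_mat V E = mat (card V) (card V)
     (\<lambda>(i, j). if i = j then real (graph_degree V E (vertex_enum V i)) else 0)"

definition lap_mat :: "'v set \<Rightarrow> ('v \<Rightarrow> 'v \<Rightarrow> bool) \<Rightarrow> real mat" where
  "lap_mat V E = deg_mat V E - adj_mat V E"

definition slap_mat :: "'v set \<Rightarrow> ('v \<Rightarrow> 'v \<Rightarrow> bool) \<Rightarrow> real mat" where
  "slap_mat V E = deg_mat V E + adj_mat V E"

definition mat_spec :: "real mat \<Rightarrow> real multiset" where
  "mat_spec A = proots (char_poly A)"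

definition graph_edges :: "'v set \<Rightarrow> ('v \<Rightarrow> 'v \<Rightarrow> bool) \<Rightarrow> 'v set set" where
  "graph_edges V E = {{u, v} | u v. u \<in> V \<and> v \<in> V \<and> E u v}"

definition avg_deg :: "'v set \<Rightarrow> ('v \<Rightarrow> 'v \<Rightarrow> bool) \<Rightarrow> real" where
  "avg_deg V E = 2 * real (card (graph_edges V E)) / real (card V)"

definition graph_energy :: "'v set \<Rightarrow> ('v \<Rightarrow> 'v \<Rightarrow> bool) \<Rightarrow> real" where
  "graph_energy V E = sum_mset (image_mset abs (mat_spec (adj_mat V E)))"

definition lap_energy :: "'v set \<Rightarrow> ('v \<Rightarrow> 'v \<Rightarrow> bool) \<Rightarrow> real" where
  "lap_energy V E = sum_mset (image_mset (\<lambda>b. \<bar>b - avg_deg V E\<bar>) (mat_spec (lap_mat V E)))"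

definition slap_energy :: "'v set \<Rightarrow> ('v \<Rightarrow> 'v \<Rightarrow> bool) \<Rightarrow> real" where
  "slap_energy V E = sum_mset (image_mset (\<lambda>c. \<bar>c - avg_deg V E\<bar>) (mat_spec (slap_mat V E)))"

end

theory Submission
  imports Defs "HOL-Algebra.Group_Action" "HOL-Computational_Algebra.Primes"
    "Jordan_Normal_Form.Schur_Decomposition" "Jordan_Normal_Form.Jordan_Normal_Form_Uniqueness"
begin

text \<open>
  For non-central x we have Z(G) < C(x) < G, and all subgroups have p-power order, so
  |C(x)| = p^(m-1). Hence commuting non-central elements have equal centralizers, and distinct
  centralizers meet exactly in Z(G). Counting |C(x) C(y)| shows that every conjugate of x
  commutes with x, so a non-central class has p elements, all with the same centralizer.
  Two classes are therefore adjacent in the NCCC-graph iff their centralizers differ: the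
  graph is complete multipartite, its parts indexed by the p + 1 centralizers (the sets
  C(x) - Z(G) partition G - Z(G)), each part consisting of (p - 1) p^(m-3) classes.

  The adjacency matrix A of a complete multipartite graph with k parts of size n satisfies
  A^2 + n A = (N - n) J and A J = (N - n) J, so its eigenvalues lie in {0, -n, (k - 1) n};
  the traces of A and A^2 determine their multiplicities. The graph is (k - 1) n-regular,
  so L and Q are affine in A, and all spectra and energies follow.
\<close>

section \<open>Spectra of matrices with a split characteristic polynomial\<close>

lemma proots_prod_linear_factors:
  "proots (\<Prod>r\<leftarrow>rs. [:-r, 1:]) = mset (rs :: 'a::idom list)"
proof (induction rs)
  case (Cons r rs)
  have "(\<Prod>r\<leftarrow>rs. [:-r, 1:]) \<noteq> 0"
    by (auto simp: prod_list_zero_iff)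
  then have "proots ([:-r, 1:] * (\<Prod>r\<leftarrow>rs. [:-r, 1:])) = proots [:-r, 1:] + proots (\<Prod>r\<leftarrow>rs. [:-r, 1:])"
    by (intro proots_mult) auto
  with Cons.IH show ?case
    by simp
qed simp

definition mat_trace :: "'a::comm_ring_1 mat \<Rightarrow> 'a" where
  "mat_trace A = (\<Sum>i<dim_row A. A $$ (i, i))"

lemma mat_trace_eq_sum_diag: "mat_trace A = sum_list (diag_mat A)"
  by (simp add: mat_trace_def diag_mat_def sum_list_sum_nth lessThan_atLeast0)

lemma mat_trace_mult_comm:
  assumes "A \<in> carrier_mat n m" and "B \<in> carrier_mat m n"
  shows "mat_trace (A * B) = mat_trace (B * A)"
proof -
  have "mat_trace (A * B) = (\<Sum>i<n. \<Sum>j<m. A $$ (i, j) * B $$ (j, i))"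
    using assms by (auto simp: mat_trace_def scalar_prod_def lessThan_atLeast0 intro!: sum.cong)
  also have "\<dots> = (\<Sum>j<m. \<Sum>i<n. B $$ (j, i) * A $$ (i, j))"
    by (subst sum.swap) (simp add: mult.commute)
  also have "\<dots> = mat_trace (B * A)"
    using assms by (auto simp: mat_trace_def scalar_prod_def lessThan_atLeast0 intro!: sum.cong)
  finally show ?thesis .
qed

lemma mat_trace_similar:
  assumes "similar_mat_wit A B P Q"
  shows "mat_trace A = mat_trace B"
proof -
  define n where "n = dim_row A"
  note wit = similar_mat_witD[OF n_def assms]
  have "mat_trace A = mat_trace ((P * B) * Q)"
    using wit by simp
  also have "\<dots> = mat_trace (Q * (P * B))"
    using wit by (intro mat_trace_mult_comm[of _ n n]) auto
  also have "\<dots> = mat_trace B"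
    using wit by (subst assoc_mult_mat[of _ n n _ n _ n, symmetric]) auto
  finally show ?thesis .
qed

lemma diag_mat_square_upper_triangular:
  fixes B :: "'a::comm_ring_1 mat"
  assumes B: "B \<in> carrier_mat n n" and ut: "upper_triangular B"
  shows "diag_mat (B * B) = map (\<lambda>r. r ^ 2) (diag_mat B)"
proof (rule nth_equalityI)
  fix i assume "i < length (diag_mat (B * B))"
  with B have i: "i < n" by (simp add: diag_mat_def)
  have "(B * B) $$ (i, i) = (\<Sum>j\<in>{0..<n}. B $$ (i, j) * B $$ (j, i))"
    using B i by (simp add: scalar_prod_def)
  also have "\<dots> = (\<Sum>j\<in>{i}. B $$ (i, j) * B $$ (j, i))"
  proof (rule sum.mono_neutral_right)
    show "\<forall>j\<in>{0..<n} - {i}. B $$ (i, j) * B $$ (j, i) = 0"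
    proof
      fix j assume "j \<in> {0..<n} - {i}"
      then consider "j < i" | "i < j" "j < n"
        by fastforce
      then show "B $$ (i, j) * B $$ (j, i) = 0"
        using B i ut by cases (auto simp: upper_triangular_def)
    qed
  qed (use i in auto)
  finally show "diag_mat (B * B) ! i = map (\<lambda>r. r ^ 2) (diag_mat B) ! i"
    using B i by (simp add: diag_mat_def power2_eq_square)
qed (use B in \<open>simp add: diag_mat_def\<close>)

lemma schur_triangularization:
  fixes A :: "'a::conjugatable_ordered_field mat"
  assumes A: "A \<in> carrier_mat n n" and cp: "char_poly A = (\<Prod>r\<leftarrow>rs. [:-r, 1:])"
  obtains B P Q where "similar_mat_wit A B P Q" and "B \<in> carrier_mat n n"
    and "upper_triangular B" and "diag_mat B = rs"
proof -
  obtain B P Q where BPQ: "schur_decomposition A rs = (B, P, Q)"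
    by (cases "schur_decomposition A rs") auto
  then have wit: "similar_mat_wit A B P Q" and "upper_triangular B" and "diag_mat B = rs"
    using schur_decomposition[OF A cp] by auto
  moreover have "B \<in> carrier_mat n n"
    using similar_mat_witD2[OF A wit] by auto
  ultimately show thesis
    by (intro that)
qed

lemma
  fixes A :: "'a::conjugatable_ordered_field mat"
  assumes A: "A \<in> carrier_mat n n" and cp: "char_poly A = (\<Prod>r\<leftarrow>rs. [:-r, 1:])"
  shows mat_trace_eq_sum_roots: "mat_trace A = sum_list rs"
    and mat_trace_square_eq_sum_roots: "mat_trace (A * A) = (\<Sum>r\<leftarrow>rs. r ^ 2)"
proof -
  obtain B P Q where wit: "similar_mat_wit A B P Q" and B: "B \<in> carrier_mat n n"
    and ut: "upper_triangular B" and diag: "diag_mat B = rs"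
    using schur_triangularization[OF A cp] .
  show "mat_trace A = sum_list rs"
    using mat_trace_similar[OF wit] diag by (simp add: mat_trace_eq_sum_diag)
  have "similar_mat_wit (A * A) (B * B) P Q"
    using similar_mat_wit_pow[OF wit, of 2] A B by (simp add: numeral_2_eq_2)
  then have "mat_trace (A * A) = mat_trace (B * B)"
    by (rule mat_trace_similar)
  then show "mat_trace (A * A) = (\<Sum>r\<leftarrow>rs. r ^ 2)"
    using diag_mat_square_upper_triangular[OF B ut] diag by (simp add: mat_trace_eq_sum_diag)
qed

lemma mat_spec_affine:
  fixes A :: "real mat"
  assumes A: "A \<in> carrier_mat n n" and cp: "char_poly A = (\<Prod>r\<leftarrow>rs. [:-r, 1:])"
  shows "mat_spec (c \<cdot>\<^sub>m 1\<^sub>m n + s \<cdot>\<^sub>m A) = mset (map (\<lambda>r. c + s * r) rs)"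
proof -
  obtain B P Q where wit: "similar_mat_wit A B P Q" and B: "B \<in> carrier_mat n n"
    and ut: "upper_triangular B" and diag: "diag_mat B = rs"
    using schur_triangularization[OF A cp] .
  have "c \<cdot>\<^sub>m 1\<^sub>m n + s \<cdot>\<^sub>m A = char_matrix (s \<cdot>\<^sub>m A) (- c)"
    using A by (intro eq_matI) (auto simp: char_matrix_def)
  moreover have "similar_mat_wit (char_matrix (s \<cdot>\<^sub>m A) (- c)) (char_matrix (s \<cdot>\<^sub>m B) (- c)) P Q"
    by (intro similar_mat_wit_char_matrix similar_mat_wit_smult wit)
  ultimately have "char_poly (c \<cdot>\<^sub>m 1\<^sub>m n + s \<cdot>\<^sub>m A) = char_poly (char_matrix (s \<cdot>\<^sub>m B) (- c))"
    by (metis char_poly_similar similar_mat_def)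
  also have "\<dots> = (\<Prod>r\<leftarrow>map (\<lambda>r. c + s * r) rs. [:-r, 1:])"
  proof -
    have "char_matrix (s \<cdot>\<^sub>m B) (- c) \<in> carrier_mat n n"
      and "upper_triangular (char_matrix (s \<cdot>\<^sub>m B) (- c))"
      using B ut by (auto simp: char_matrix_def upper_triangular_def)
    moreover have "diag_mat (char_matrix (s \<cdot>\<^sub>m B) (- c)) = map (\<lambda>r. c + s * r) rs"
      using B diag by (auto simp: diag_mat_def char_matrix_def)
    ultimately show ?thesis
      by (simp add: char_poly_upper_triangular)
  qed
  finally show ?thesis
    unfolding mat_spec_def by (simp only: proots_prod_linear_factors)
qed

lemma smult_mat_mult_vec:
  "dim_vec v = dim_col A \<Longrightarrow> (k \<cdot>\<^sub>m A) *\<^sub>v v = k \<cdot>\<^sub>v (A *\<^sub>v (v :: 'a::comm_ring vec))"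
  by (rule eq_vecI) (auto simp: scalar_prod_def sum_distrib_left ac_simps intro!: sum.cong)

lemma eigenvalue_root_of_annihilating_cubic:
  fixes A J :: "'a::field mat"
  assumes A: "A \<in> carrier_mat n n" and J: "J \<in> carrier_mat n n"
    and square: "A * A + b \<cdot>\<^sub>m A = a \<cdot>\<^sub>m J" and AJ: "A * J = a \<cdot>\<^sub>m J"
    and "eigenvalue A e"
  shows "e * (e + b) * (e - a) = 0"
proof -
  from \<open>eigenvalue A e\<close> obtain v where v: "v \<in> carrier_vec n" "v \<noteq> 0\<^sub>v n" "A *\<^sub>v v = e \<cdot>\<^sub>v v"
    using A unfolding eigenvalue_def eigenvector_def by auto
  then obtain i where i: "i < n" "v $ i \<noteq> 0"
    by (metis eq_vecI carrier_vecD index_zero_vec)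
  define A2 where "A2 = A * A + b \<cdot>\<^sub>m A"
  have A2: "A2 \<in> carrier_mat n n"
    using A by (simp add: A2_def)
  have "A * A2 = a \<cdot>\<^sub>m A2"
    using A J by (simp add: A2_def square AJ mult_smult_distrib)
  have "A2 *\<^sub>v v = A *\<^sub>v (A *\<^sub>v v) + b \<cdot>\<^sub>v (A *\<^sub>v v)"
    using A v by (simp add: A2_def add_mult_distrib_mat_vec[of _ n n] smult_mat_mult_vec)
  then have A2v: "A2 *\<^sub>v v = (e * e + b * e) \<cdot>\<^sub>v v"
    using A v by (simp add: mult_mat_vec smult_smult_assoc add_smult_distrib_vec)
  have "(A * A2) *\<^sub>v v = (e * (e * e + b * e)) \<cdot>\<^sub>v v"
    using A A2 v A2v by (simp add: mult_mat_vec smult_smult_assoc mult.commute)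
  moreover have "(a \<cdot>\<^sub>m A2) *\<^sub>v v = (a * (e * e + b * e)) \<cdot>\<^sub>v v"
    using A2 v A2v by (simp add: smult_mat_mult_vec smult_smult_assoc)
  ultimately have "e * (e * e + b * e) * v $ i = a * (e * e + b * e) * v $ i"
    using \<open>A * A2 = a \<cdot>\<^sub>m A2\<close> i v(1) by (metis index_smult_vec(1) carrier_vecD)
  then have "e * (e + b) * (e - a) * v $ i = 0"
    by (simp add: algebra_simps)
  with i show ?thesis
    by simp
qed

lemma char_poly_real_splits:
  fixes A :: "real mat"
  assumes A: "A \<in> carrier_mat n n"
    and real_ev: "\<And>c. eigenvalue (map_mat complex_of_real A) c \<Longrightarrow> c \<in> complex_of_real ` S"
  obtains rs where "char_poly A = (\<Prod>r\<leftarrow>rs. [:-r, 1:])" and "length rs = n" and "set rs \<subseteq> S"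
proof -
  interpret of_real_poly: map_poly_inj_comm_ring_hom complex_of_real ..
  let ?C = "map_mat complex_of_real A"
  have C: "?C \<in> carrier_mat n n"
    using A by simp
  obtain cs where cs: "char_poly ?C = (\<Prod>c\<leftarrow>cs. [:-c, 1:])" "length cs = n"
    using char_poly_factorized[OF C] by auto
  have cs_real: "c \<in> complex_of_real ` S" if "c \<in> set cs" for c
  proof -
    have "poly (char_poly ?C) c = 0"
      using that unfolding cs(1) by (auto simp: poly_prod_list prod_list_zero_iff)
    then show ?thesis
      using real_ev eigenvalue_root_char_poly[OF C] by blast
  qed
  define rs where "rs = map Re cs"
  have cs_rs: "cs = map complex_of_real rs"
    unfolding rs_def map_map by (intro map_idI[symmetric]) (auto dest!: cs_real)
  have "map_poly complex_of_real (char_poly A) = char_poly ?C"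
    by (rule of_real_hom.char_poly_hom[OF A, symmetric])
  also have "\<dots> = map_poly complex_of_real (\<Prod>r\<leftarrow>rs. [:-r, 1:])"
    unfolding cs(1) cs_rs by (simp add: of_real_poly.hom_prod_list o_def)
  finally have "char_poly A = (\<Prod>r\<leftarrow>rs. [:-r, 1:])"
    by (rule of_real_poly.injectivity)
  moreover have "length rs = n" and "set rs \<subseteq> S"
    using cs(2) by (auto simp: rs_def dest!: cs_real)
  ultimately show thesis
    using that by blast
qed

section \<open>Complete multipartite graphs\<close>

definition multipartite_mat :: "nat \<Rightarrow> (nat \<Rightarrow> 'c) \<Rightarrow> 'a::comm_ring_1 mat" where
  "multipartite_mat N g = mat N N (\<lambda>(i, j). if g i = g j then 0 else 1)"

definition all_ones_mat :: "nat \<Rightarrow> 'a::comm_ring_1 mat" where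
  "all_ones_mat N = mat N N (\<lambda>_. 1)"

lemma multipartite_mat_carrier [simp]: "multipartite_mat N g \<in> carrier_mat N N"
  by (simp add: multipartite_mat_def)

lemma all_ones_mat_carrier [simp]: "all_ones_mat N \<in> carrier_mat N N"
  by (simp add: all_ones_mat_def)

lemma sum_indicator_eq_card:
  "finite A \<Longrightarrow> (\<Sum>l\<in>A. if P l then 1 else 0) = (of_nat (card {l\<in>A. P l}) :: 'a::comm_semiring_1)"
  by (simp add: sum.If_cases Int_def)

lemma multipartite_mat_trace: "mat_trace (multipartite_mat N g :: 'a::comm_ring_1 mat) = 0"
  by (simp add: mat_trace_def multipartite_mat_def)

lemma map_mat_of_real_multipartite_mat:
  "map_mat complex_of_real (multipartite_mat N g) = multipartite_mat N g"
  by (rule eq_matI) (auto simp: multipartite_mat_def)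

lemma mset_eq_replicate_counts:
  assumes "set xs \<subseteq> {a, b, c}" and "a \<noteq> b" and "a \<noteq> c" and "b \<noteq> c"
  shows "mset xs = replicate_mset (count (mset xs) a) a + replicate_mset (count (mset xs) b) b
    + replicate_mset (count (mset xs) c) c"
proof (rule multiset_eqI)
  fix x
  show "count (mset xs) x = count (replicate_mset (count (mset xs) a) a
      + replicate_mset (count (mset xs) b) b + replicate_mset (count (mset xs) c) c) x"
  proof (cases "x \<in> {a, b, c}")
    case False
    with assms(1) have "x \<notin> set xs"
      by blast
    with False show ?thesis
      by (simp add: count_mset_0_iff)
  qed (use assms in auto)
qed

lemma solve_moment_equations:
  fixes c1 c2 n d :: real
  assumes first: "c2 * d = c1 * n" and second: "c1 * n ^ 2 + c2 * d ^ 2 = (n + d) * d"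
    and "n > 0" and "d > 0"
  shows "c2 = 1" and "c1 * n = d"
proof -
  have "c1 * n ^ 2 = (c1 * n) * n"
    by (simp add: power2_eq_square)
  also have "\<dots> = c2 * d * n"
    by (simp only: first)
  finally have "c1 * n ^ 2 = c2 * d * n" .
  moreover have "c2 * ((n + d) * d) = c2 * d * n + c2 * d ^ 2"
    by (simp add: algebra_simps power2_eq_square)
  ultimately have "c2 * ((n + d) * d) = (n + d) * d"
    using second by linarith
  moreover have "(n + d) * d \<noteq> 0"
    using \<open>n > 0\<close> \<open>d > 0\<close> by simp
  ultimately show "c2 = 1"
    by simp
  with first show "c1 * n = d"
    by simp
qed

lemma multiplicities_from_power_sums:
  fixes rs :: "real list" and k n :: nat
  defines "d \<equiv> (k - 1) * n"
  assumes rs_values: "set rs \<subseteq> {0, - real n, real d}" and length: "length rs = k * n"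
    and "k \<ge> 2" and "n \<ge> 1"
    and sum: "sum_list rs = 0" and sum_squares: "(\<Sum>r\<leftarrow>rs. r ^ 2) = real (k * n) * real d"
  shows "mset rs = replicate_mset (k * (n - 1)) 0 + replicate_mset (k - 1) (- real n) + {# real d #}"
proof -
  define c0 c1 c2 where "c0 = count (mset rs) 0" and "c1 = count (mset rs) (- real n)"
    and "c2 = count (mset rs) (real d)"
  have d_pos: "real d > 0"
    using \<open>k \<ge> 2\<close> \<open>n \<ge> 1\<close> by (simp add: d_def)
  then have rs: "mset rs = replicate_mset c0 0 + replicate_mset c1 (- real n) + replicate_mset c2 (real d)"
    unfolding c0_def c1_def c2_def using rs_values \<open>n \<ge> 1\<close> by (intro mset_eq_replicate_counts) auto
  have size: "k * n = c0 + c1 + c2"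
    using arg_cong[OF rs, of size] length by simp
  have first_moment: "real c2 * real d = real c1 * real n"
    using arg_cong[OF rs, of sum_mset] sum by (simp add: sum_mset_sum_list)
  have second_moment: "real c1 * real n ^ 2 + real c2 * real d ^ 2 = real (k * n) * real d"
    using arg_cong[OF rs, of "\<lambda>M. sum_mset (image_mset (\<lambda>r. r ^ 2) M)"] sum_squares
    by (simp add: sum_mset_sum_list flip: mset_map)
  have "real n + real d = real (k * n)"
    using \<open>k \<ge> 2\<close> by (simp add: d_def of_nat_diff algebra_simps)
  with second_moment have second: "real c1 * real n ^ 2 + real c2 * real d ^ 2 = (real n + real d) * real d"
    by simp
  have n_pos: "real n > 0"
    using \<open>n \<ge> 1\<close> by simp
  from solve_moment_equations[OF first_moment second n_pos d_pos]
  have c2: "c2 = 1" and "real c1 * real n = real (k - 1) * real n"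
    by (simp_all add: d_def)
  with n_pos have c1: "c1 = k - 1"
    by simp
  with c2 size \<open>k \<ge> 2\<close> have "c0 = k * (n - 1)"
    by (simp add: diff_mult_distrib2)
  with c1 c2 rs show ?thesis
    by simp
qed

context
  fixes N n :: nat and g :: "nat \<Rightarrow> 'c"
  assumes part_size: "\<And>i. i < N \<Longrightarrow> card {l. l < N \<and> g l = g i} = n"
begin

lemma card_outside_two_parts:
  assumes "i < N" and "j < N"
  \<comment> \<open>stated additively, which sidesteps truncated subtraction when the parts differ\<close>
  shows "card {l. l < N \<and> g l \<noteq> g i \<and> g l \<noteq> g j} + (if g i = g j then 0 else n) = N - n"
proof -
  let ?Pi = "{l. l < N \<and> g l = g i}" and ?Pj = "{l. l < N \<and> g l = g j}"
  have eq: "{l. l < N \<and> g l \<noteq> g i \<and> g l \<noteq> g j} = {..<N} - (?Pi \<union> ?Pj)"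
    by auto
  have "card (?Pi \<union> ?Pj) = (if g i = g j then n else 2 * n)"
  proof (cases "g i = g j")
    case False
    then have "?Pi \<inter> ?Pj = {}"
      by auto
    with False show ?thesis
      using card_Un_disjoint[of ?Pi ?Pj] part_size assms by auto
  qed (use part_size assms in simp)
  moreover have "card (?Pi \<union> ?Pj) \<le> N"
    using card_mono[of "{..<N}" "?Pi \<union> ?Pj"] by auto
  ultimately show ?thesis
    unfolding eq by (subst card_Diff_subset) (auto split: if_splits)
qed

lemma multipartite_mat_square:
  "multipartite_mat N g * multipartite_mat N g + of_nat n \<cdot>\<^sub>m multipartite_mat N g
     = (of_nat (N - n) \<cdot>\<^sub>m all_ones_mat N :: 'a::comm_ring_1 mat)"
proof (rule eq_matI)
  fix i j assume "i < dim_row (of_nat (N - n) \<cdot>\<^sub>m all_ones_mat N :: 'a mat)"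
    and "j < dim_col (of_nat (N - n) \<cdot>\<^sub>m all_ones_mat N :: 'a mat)"
  then have i: "i < N" and j: "j < N"
    by (auto simp: all_ones_mat_def)
  have "(multipartite_mat N g * multipartite_mat N g :: 'a mat) $$ (i, j)
      = (\<Sum>l\<in>{..<N}. if g l \<noteq> g i \<and> g l \<noteq> g j then 1 else 0)"
    using i j by (auto simp: multipartite_mat_def scalar_prod_def lessThan_atLeast0 intro!: sum.cong)
  also have "\<dots> = of_nat (card {l. l < N \<and> g l \<noteq> g i \<and> g l \<noteq> g j})"
    by (simp add: sum_indicator_eq_card)
  finally show "(multipartite_mat N g * multipartite_mat N g + of_nat n \<cdot>\<^sub>m multipartite_mat N g) $$ (i, j)
      = (of_nat (N - n) \<cdot>\<^sub>m all_ones_mat N :: 'a mat) $$ (i, j)"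
    using i j arg_cong[OF card_outside_two_parts[OF i j], of of_nat]
    by (auto simp: multipartite_mat_def all_ones_mat_def)
qed (auto simp: multipartite_mat_def all_ones_mat_def)

lemma multipartite_mat_mult_all_ones:
  "multipartite_mat N g * all_ones_mat N = (of_nat (N - n) \<cdot>\<^sub>m all_ones_mat N :: 'a::comm_ring_1 mat)"
proof (rule eq_matI)
  fix i j assume "i < dim_row (of_nat (N - n) \<cdot>\<^sub>m all_ones_mat N :: 'a mat)"
    and "j < dim_col (of_nat (N - n) \<cdot>\<^sub>m all_ones_mat N :: 'a mat)"
  then have i: "i < N" and j: "j < N"
    by (auto simp: all_ones_mat_def)
  have "(multipartite_mat N g * all_ones_mat N :: 'a mat) $$ (i, j) = (\<Sum>l\<in>{..<N}. if g l \<noteq> g i then 1 else 0)"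
    using i j by (auto simp: multipartite_mat_def all_ones_mat_def scalar_prod_def lessThan_atLeast0 intro!: sum.cong)
  also have "\<dots> = of_nat (card {l. l < N \<and> g l \<noteq> g i \<and> g l \<noteq> g i})"
    by (simp add: sum_indicator_eq_card)
  finally show "(multipartite_mat N g * all_ones_mat N :: 'a mat) $$ (i, j)
      = (of_nat (N - n) \<cdot>\<^sub>m all_ones_mat N :: 'a mat) $$ (i, j)"
    using i j card_outside_two_parts[OF i i] by (simp add: all_ones_mat_def)
qed (auto simp: multipartite_mat_def all_ones_mat_def)

lemma multipartite_mat_eigenvalue:
  assumes "eigenvalue (multipartite_mat N g :: 'a::field mat) e"
  shows "e \<in> {0, - of_nat n, of_nat (N - n)}"
  using eigenvalue_root_of_annihilating_cubic[OF multipartite_mat_carrier all_ones_mat_carrier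
      multipartite_mat_square multipartite_mat_mult_all_ones assms]
  by (auto simp: eq_neg_iff_add_eq_0)

lemma multipartite_mat_trace_square:
  "mat_trace (multipartite_mat N g * multipartite_mat N g :: 'a::comm_ring_1 mat) = of_nat N * of_nat (N - n)"
proof -
  let ?A = "multipartite_mat N g :: 'a mat"
  have "(?A * ?A) $$ (i, i) = of_nat (N - n)" if "i < N" for i
    using arg_cong[OF multipartite_mat_square, of "\<lambda>M. M $$ (i, i)"] that
    by (simp add: multipartite_mat_def all_ones_mat_def)
  moreover have "dim_row ?A = N"
    by (simp add: multipartite_mat_def)
  ultimately show ?thesis
    by (simp add: mat_trace_def)
qed

lemma multipartite_mat_char_poly:
  assumes N: "N = k * n" and "k \<ge> 2" and "n \<ge> 1"
  obtains rs where "char_poly (multipartite_mat N g :: real mat) = (\<Prod>r\<leftarrow>rs. [:-r, 1:])"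
    and "mset rs = replicate_mset (k * (n - 1)) 0 + replicate_mset (k - 1) (- real n)
                   + {# real ((k - 1) * n) #}"
proof -
  let ?A = "multipartite_mat N g :: real mat"
  have d: "N - n = (k - 1) * n"
    using N by (simp add: diff_mult_distrib)
  obtain rs where cp: "char_poly ?A = (\<Prod>r\<leftarrow>rs. [:-r, 1:])" and "length rs = N"
    and "set rs \<subseteq> {0, - real n, real (N - n)}"
  proof (rule char_poly_real_splits[OF multipartite_mat_carrier])
    fix c assume "eigenvalue (map_mat complex_of_real ?A) c"
    then have "c \<in> {0, - of_nat n, of_nat (N - n)}"
      using multipartite_mat_eigenvalue by (simp add: map_mat_of_real_multipartite_mat)
    then show "c \<in> complex_of_real ` {0, - real n, real (N - n)}"
      by auto
  qed
  moreover have "mat_trace ?A = 0" and "mat_trace (?A * ?A) = real N * real (N - n)"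
    by (rule multipartite_mat_trace, rule multipartite_mat_trace_square)
  then have "sum_list rs = 0" and "(\<Sum>r\<leftarrow>rs. r ^ 2) = real N * real (N - n)"
    using mat_trace_eq_sum_roots[OF multipartite_mat_carrier cp]
      mat_trace_square_eq_sum_roots[OF multipartite_mat_carrier cp] by simp_all
  ultimately have "set rs \<subseteq> {0, - real n, real ((k - 1) * n)}" and "length rs = k * n"
    and "sum_list rs = 0" and "(\<Sum>r\<leftarrow>rs. r ^ 2) = real (k * n) * real ((k - 1) * n)"
    unfolding N[symmetric] d[symmetric] by simp_all
  then have "mset rs = replicate_mset (k * (n - 1)) 0 + replicate_mset (k - 1) (- real n)
                   + {# real ((k - 1) * n) #}"
    using \<open>k \<ge> 2\<close> \<open>n \<ge> 1\<close> by (intro multiplicities_from_power_sums)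
  with cp show thesis
    using that by blast
qed

end


lemma vertex_enum_bij: "finite V \<Longrightarrow> bij_betw (vertex_enum V) {..<card V} V"
proof -
  assume "finite V"
  then obtain h where "bij_betw h {..<card V} V"
    using ex_bij_betw_nat_finite lessThan_atLeast0 by metis
  then show ?thesis
    unfolding vertex_enum_def by (rule someI[of _ h])
qed

lemma card_eq_card_image_mult_fibre_size:
  assumes "finite V" and "\<And>u. u \<in> V \<Longrightarrow> card {w \<in> V. f w = f u} = n"
  shows "card V = card (f ` V) * n"
proof -
  have "card V = (\<Sum>y\<in>f ` V. card {x \<in> V. f x = y})"
    using sum.image_gen[OF assms(1), of "\<lambda>_. 1::nat" f] by simp
  also have "\<dots> = (\<Sum>y\<in>f ` V. n)"
    using assms(2) by (intro sum.cong) auto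
  finally show ?thesis
    by simp
qed

lemma card_graph_edges_regular:
  assumes "finite V" and sym: "\<And>u v. u \<in> V \<Longrightarrow> v \<in> V \<Longrightarrow> E u v \<Longrightarrow> E v u"
    and irrefl: "\<And>u. u \<in> V \<Longrightarrow> \<not> E u u"
    and regular: "\<And>u. u \<in> V \<Longrightarrow> graph_degree V E u = d"
  shows "2 * card (graph_edges V E) = card V * d"
proof -
  define arcs where "arcs = Sigma V (\<lambda>u. {w \<in> V. E u w})"
  define edge where "edge = (\<lambda>(u::'a, v). {u, v})"
  have "card arcs = card V * d"
    using assms(1) regular by (simp add: arcs_def card_SigmaI graph_degree_def)
  also have "card arcs = (\<Sum>e\<in>edge ` arcs. card {a \<in> arcs. edge a = e})"
    using sum.image_gen[of arcs "\<lambda>_. 1::nat" edge] assms(1) by (simp add: arcs_def)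
  also have "\<dots> = (\<Sum>e\<in>edge ` arcs. 2)"
  proof (rule sum.cong[OF refl])
    fix e assume "e \<in> edge ` arcs"
    then obtain u v where uv: "u \<in> V" "v \<in> V" "E u v" and e: "e = {u, v}"
      by (auto simp: arcs_def edge_def)
    moreover have "E v u" and "u \<noteq> v"
      using sym irrefl uv by auto
    ultimately have "{a \<in> arcs. edge a = e} = {(u, v), (v, u)}"
      unfolding arcs_def edge_def by (auto simp: doubleton_eq_iff)
    with \<open>u \<noteq> v\<close> show "card {a \<in> arcs. edge a = e} = 2"
      by simp
  qed
  also have "edge ` arcs = graph_edges V E"
    by (auto simp: graph_edges_def arcs_def edge_def)
  finally show ?thesis
    by simp
qed

locale complete_multipartite_graph =
  fixes V :: "'v set" and E :: "'v \<Rightarrow> 'v \<Rightarrow> bool" and part :: "'v \<Rightarrow> 'p" and n :: nat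
  assumes finite_vertices: "finite V"
    and adjacent_iff: "\<And>u v. u \<in> V \<Longrightarrow> v \<in> V \<Longrightarrow> E u v \<longleftrightarrow> part u \<noteq> part v"
    and part_size: "\<And>u. u \<in> V \<Longrightarrow> card {w \<in> V. part w = part u} = n"
begin

lemma card_vertices: "card V = card (part ` V) * n"
  using card_eq_card_image_mult_fibre_size[OF finite_vertices part_size] .

lemma graph_degree: 
  assumes "u \<in> V"
  shows "graph_degree V E u = card V - n"
proof -
  have "{w \<in> V. E u w} = V - {w \<in> V. part w = part u}"
    using adjacent_iff assms by auto
  then show ?thesis
    using part_size assms finite_vertices by (simp add: graph_degree_def card_Diff_subset)
qed

lemma avg_deg: 
  assumes "V \<noteq> {}"
  shows "avg_deg V E = real (card V - n)"
proof -
  have "2 * card (graph_edges V E) = card V * (card V - n)"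
    using finite_vertices adjacent_iff by (intro card_graph_edges_regular graph_degree) auto
  then have "2 * real (card (graph_edges V E)) = real (card V) * real (card V - n)"
    by (metis of_nat_mult of_nat_numeral)
  with assms finite_vertices show ?thesis
    by (simp add: avg_deg_def field_simps)
qed

definition enum_part :: "nat \<Rightarrow> 'p" where
  "enum_part = part \<circ> vertex_enum V"

lemma enum_part_size:
  assumes "i < card V"
  shows "card {l. l < card V \<and> enum_part l = enum_part i} = n"
proof -
  let ?e = "vertex_enum V" and ?I = "{l. l < card V \<and> enum_part l = enum_part i}"
  have bij: "bij_betw ?e {..<card V} V"
    by (rule vertex_enum_bij[OF finite_vertices])
  then have "inj_on ?e ?I"
    by (auto simp: bij_betw_def intro: inj_on_subset)
  then have "card ?I = card (?e ` ?I)"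
    by (simp add: card_image)
  also have "?e ` ?I = {w \<in> V. part w = part (?e i)}"
  proof
    show "?e ` ?I \<subseteq> {w \<in> V. part w = part (?e i)}"
      using bij by (auto simp: bij_betw_def enum_part_def)
    show "{w \<in> V. part w = part (?e i)} \<subseteq> ?e ` ?I"
    proof
      fix w assume w: "w \<in> {w \<in> V. part w = part (?e i)}"
      then obtain l where "l < card V" "w = ?e l"
        using bij by (auto simp: bij_betw_def)
      with w show "w \<in> ?e ` ?I"
        by (auto simp: enum_part_def)
    qed
  qed
  also have "card \<dots> = n"
    using part_size bij assms by (auto simp: bij_betw_def)
  finally show ?thesis .
qed

lemma adj_mat_eq: "adj_mat V E = multipartite_mat (card V) enum_part"
proof -
  have "vertex_enum V i \<in> V" if "i < card V" for i
    using vertex_enum_bij[OF finite_vertices] that by (auto simp: bij_betw_def)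
  then show ?thesis
    unfolding adj_mat_def multipartite_mat_def enum_part_def
    by (intro eq_matI) (auto simp: adjacent_iff)
qed

lemma deg_mat_eq: "deg_mat V E = real (card V - n) \<cdot>\<^sub>m 1\<^sub>m (card V)"
proof -
  have "vertex_enum V i \<in> V" if "i < card V" for i
    using vertex_enum_bij[OF finite_vertices] that by (auto simp: bij_betw_def)
  then show ?thesis
    unfolding deg_mat_def by (intro eq_matI) (auto simp: graph_degree)
qed

theorem spectra:
  assumes k: "card (part ` V) = k" "k \<ge> 2" and n: "n \<ge> 1"
  shows "mat_spec (adj_mat V E) = replicate_mset (k * (n - 1)) 0 + replicate_mset (k - 1) (- real n)
           + {# real ((k - 1) * n) #}"
    and "mat_spec (lap_mat V E) = {# 0 #} + replicate_mset (k * (n - 1)) (real ((k - 1) * n))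
           + replicate_mset (k - 1) (real (k * n))"
    and "mat_spec (slap_mat V E) = replicate_mset (k * (n - 1)) (real ((k - 1) * n))
           + replicate_mset (k - 1) (real ((k - 2) * n)) + {# 2 * real ((k - 1) * n) #}"
proof -
  define N where "N = card V"
  have N: "N = k * n"
    using card_vertices k by (simp add: N_def)
  have d: "N - n = (k - 1) * n"
    using N by (simp add: diff_mult_distrib)
  obtain rs where cp: "char_poly (adj_mat V E) = (\<Prod>r\<leftarrow>rs. [:-r, 1:])"
    and rs: "mset rs = replicate_mset (k * (n - 1)) 0 + replicate_mset (k - 1) (- real n)
                   + {# real ((k - 1) * n) #}"
    using multipartite_mat_char_poly[OF enum_part_size[folded N_def] N k(2) n]
    unfolding adj_mat_eq N_def .
  have A: "adj_mat V E \<in> carrier_mat N N"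
    by (simp add: adj_mat_def N_def)
  have deg: "deg_mat V E = real ((k - 1) * n) \<cdot>\<^sub>m 1\<^sub>m N"
    using deg_mat_eq d by (simp add: N_def)
  have kn: "real ((k - 1) * n) + real n = real (k * n)"
    and kn2: "real ((k - 1) * n) - real n = real ((k - 2) * n)"
    using k(2) by (simp_all add: of_nat_diff algebra_simps)
  show "mat_spec (adj_mat V E) = replicate_mset (k * (n - 1)) 0 + replicate_mset (k - 1) (- real n)
           + {# real ((k - 1) * n) #}"
    by (simp add: mat_spec_def cp proots_prod_linear_factors rs)
  have "lap_mat V E = real ((k - 1) * n) \<cdot>\<^sub>m 1\<^sub>m N + (-1) \<cdot>\<^sub>m adj_mat V E"
    using A by (intro eq_matI) (auto simp: lap_mat_def deg)
  then show "mat_spec (lap_mat V E) = {# 0 #} + replicate_mset (k * (n - 1)) (real ((k - 1) * n))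
           + replicate_mset (k - 1) (real (k * n))"
    using kn by (simp add: mat_spec_affine[OF A cp] rs mset_map)
  have "slap_mat V E = real ((k - 1) * n) \<cdot>\<^sub>m 1\<^sub>m N + 1 \<cdot>\<^sub>m adj_mat V E"
    using A by (intro eq_matI) (auto simp: slap_mat_def deg)
  then show "mat_spec (slap_mat V E) = replicate_mset (k * (n - 1)) (real ((k - 1) * n))
           + replicate_mset (k - 1) (real ((k - 2) * n)) + {# 2 * real ((k - 1) * n) #}"
    using kn2 by (simp add: mat_spec_affine[OF A cp] rs mset_map)
qed

theorem energies:
  assumes k: "card (part ` V) = k" "k \<ge> 2" and n: "n \<ge> 1"
  shows "graph_energy V E = 2 * real ((k - 1) * n)"
    and "lap_energy V E = 2 * real ((k - 1) * n)"
    and "slap_energy V E = 2 * real ((k - 1) * n)"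
proof -
  have N: "card V = k * n"
    using card_vertices k by simp
  with k n have "V \<noteq> {}"
    by auto
  with N have "avg_deg V E = real ((k - 1) * n)"
    using avg_deg by (simp add: diff_mult_distrib)
  moreover have "real (k * n) - real ((k - 1) * n) = real n"
    and "real ((k - 2) * n) - real ((k - 1) * n) = - real n"
    using k(2) by (simp_all add: of_nat_diff algebra_simps)
  ultimately show "graph_energy V E = 2 * real ((k - 1) * n)"
    and "lap_energy V E = 2 * real ((k - 1) * n)"
    and "slap_energy V E = 2 * real ((k - 1) * n)"
    unfolding graph_energy_def lap_energy_def slap_energy_def spectra[OF assms]
    by (simp_all add: sum_mset_replicate_mset)
qed

end

section \<open>Groups whose centre has index p^2\<close>

definition centralizer :: "('a, 'b) monoid_scheme \<Rightarrow> 'a \<Rightarrow> 'a set" where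
  "centralizer G x = {g \<in> carrier G. g \<otimes>\<^bsub>G\<^esub> x = x \<otimes>\<^bsub>G\<^esub> g}"

context group
begin

lemma centralizer_subset_carrier: "centralizer G x \<subseteq> carrier G"
  by (auto simp: centralizer_def)

lemma self_in_centralizer: "x \<in> carrier G \<Longrightarrow> x \<in> centralizer G x"
  by (simp add: centralizer_def)

lemma grp_center_subset_centralizer: "x \<in> carrier G \<Longrightarrow> grp_center G \<subseteq> centralizer G x"
  by (auto simp: grp_center_def centralizer_def)

lemma grp_center_subset_carrier: "grp_center G \<subseteq> carrier G"
  by (auto simp: grp_center_def)

lemma centralizer_eq_stabilizer:
  assumes x: "x \<in> carrier G"
  shows "centralizer G x = stabilizer G (\<lambda>g. \<lambda>h \<in> carrier G. g \<otimes> h \<otimes> inv g) x"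
proof -
  have "g \<otimes> x \<otimes> inv g = x \<longleftrightarrow> g \<otimes> x = x \<otimes> g" if g: "g \<in> carrier G" for g
    using g x by (metis inv_solve_right m_closed)
  then show ?thesis
    using x by (auto simp: centralizer_def stabilizer_def)
qed

lemma subgroup_centralizer: "x \<in> carrier G \<Longrightarrow> subgroup (centralizer G x) G"
  using centralizer_eq_stabilizer group_action.stabilizer_subgroup[OF action_by_conjugation] by simp

lemma conj_class_eq_orbit:
  "x \<in> carrier G \<Longrightarrow> conj_class G x = orbit G (\<lambda>g. \<lambda>h \<in> carrier G. g \<otimes> h \<otimes> inv g) x"
  by (auto simp: orbit_def conj_class_def)

lemma conj_class_self: "x \<in> carrier G \<Longrightarrow> x \<in> conj_class G x"
  unfolding conj_class_def by (rule CollectI, rule exI[of _ \<one>]) auto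

lemma conj_class_subset_carrier: "x \<in> carrier G \<Longrightarrow> conj_class G x \<subseteq> carrier G"
  by (auto simp: conj_class_def)

lemma card_conj_class_mult_card_centralizer:
  "x \<in> carrier G \<Longrightarrow> card (conj_class G x) * card (centralizer G x) = order G"
  using group_action.orbit_stabilizer_theorem[OF action_by_conjugation]
  by (simp add: conj_class_eq_orbit centralizer_eq_stabilizer)

lemma conj_classes_disjoint:
  assumes "x \<in> carrier G" and "y \<in> carrier G" and "conj_class G x \<noteq> conj_class G y"
  shows "conj_class G x \<inter> conj_class G y = {}"
  using group_action.disjoint_union[OF action_by_conjugation] assms
  by (auto simp: conj_class_eq_orbit orbits_def)

lemma noncentral_elementE:
  assumes "\<not> comm_group G"
  obtains x where "x \<in> carrier G" and "x \<notin> grp_center G"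
proof -
  have "\<not> (\<forall>x \<in> carrier G. x \<in> grp_center G)"
    using assms group_comm_groupI by (auto simp: grp_center_def)
  with that show thesis
    by blast
qed

lemma nccc_vertexE:
  assumes "X \<in> nccc_vertices G"
  obtains x where "x \<in> carrier G" and "x \<notin> grp_center G" and "X = conj_class G x"
  using assms by (auto simp: nccc_vertices_def)

lemma pairwise_disjnt_nccc_vertices: "pairwise disjnt (nccc_vertices G)"
proof (rule pairwiseI)
  fix X Y assume "X \<in> nccc_vertices G" "Y \<in> nccc_vertices G" "X \<noteq> Y"
  then obtain y z where "y \<in> carrier G" "z \<in> carrier G" "X = conj_class G y" "Y = conj_class G z"
    by (auto elim!: nccc_vertexE)
  with \<open>X \<noteq> Y\<close> show "disjnt X Y"
    using conj_classes_disjoint by (simp add: disjnt_def)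
qed

lemma card_factorisations_le:
  assumes A: "subgroup A G" and B: "subgroup B G" and fin: "finite (carrier G)"
    and a: "a \<in> A" and b: "b \<in> B"
  shows "card {z \<in> A \<times> B. fst z \<otimes> snd z = a \<otimes> b} \<le> card (A \<inter> B)"
proof -
  let ?F = "{z \<in> A \<times> B. fst z \<otimes> snd z = a \<otimes> b}"
  have A_carrier: "A \<subseteq> carrier G" and B_carrier: "B \<subseteq> carrier G"
    using A B subgroup.subset by auto
  \<comment> \<open>a factorisation a' b' of a b is determined by a'\<inverse> a = b' b\<inverse> \<in> A \<inter> B\<close>
  define quot where "quot = (\<lambda>z :: 'a \<times> 'a. inv (fst z) \<otimes> a)"
  have "quot ` ?F \<subseteq> A \<inter> B"
  proof clarify
    fix a' b' assume factors: "a' \<in> A" "b' \<in> B" "fst (a', b') \<otimes> snd (a', b') = a \<otimes> b"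
    then have "inv a' \<otimes> a = b' \<otimes> inv b"
      using a b A_carrier B_carrier by (simp add: inv_solve_left inv_solve_right m_assoc subsetD)
    moreover have "inv a' \<otimes> a \<in> A" and "b' \<otimes> inv b \<in> B"
      using factors a b A B by (simp_all add: subgroup.m_closed subgroup.m_inv_closed)
    ultimately show "quot (a', b') \<in> A \<inter> B"
      by (simp add: quot_def)
  qed
  moreover have "inj_on quot ?F"
  proof (rule inj_onI, clarsimp)
    fix a1 b1 a2 b2 assume "a1 \<in> A" "b1 \<in> B" "a2 \<in> A" "b2 \<in> B"
      and "a1 \<otimes> b1 = a \<otimes> b" "a2 \<otimes> b2 = a \<otimes> b" "quot (a1, b1) = quot (a2, b2)"
    with a b A_carrier B_carrier show "a1 = a2 \<and> b1 = b2"
      by (auto simp: quot_def subsetD) (metis Units_eq Units_l_cancel subsetD)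
  qed
  moreover have "finite (A \<inter> B)"
    using A_carrier fin finite_subset by blast
  ultimately show ?thesis
    by (meson card_inj_on_le)
qed

lemma card_subgroups_mult_le:
  assumes A: "subgroup A G" and B: "subgroup B G" and fin: "finite (carrier G)"
  shows "card A * card B \<le> card (A <#> B) * card (A \<inter> B)"
proof -
  define mult where "mult = (\<lambda>z. fst z \<otimes> snd z)"
  have "finite (A \<times> B)"
    using A B fin subgroup.subset finite_subset by (metis finite_cartesian_product)
  then have "card A * card B = (\<Sum>s\<in>mult ` (A \<times> B). card {z \<in> A \<times> B. mult z = s})"
    using sum.image_gen[of "A \<times> B" "\<lambda>_. 1::nat" mult] by (simp add: card_cartesian_product)
  also have "\<dots> \<le> (\<Sum>s\<in>mult ` (A \<times> B). card (A \<inter> B))"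
    using card_factorisations_le[OF A B fin] by (intro sum_mono) (auto simp: mult_def)
  also have "mult ` (A \<times> B) = A <#> B"
    by (force simp: mult_def set_mult_def)
  finally show ?thesis
    by simp
qed

lemma conj_mult_conj:
  assumes "g \<in> carrier G" "a \<in> carrier G" "b \<in> carrier G"
  shows "(g \<otimes> a \<otimes> inv g) \<otimes> (g \<otimes> b \<otimes> inv g) = g \<otimes> (a \<otimes> b) \<otimes> inv g"
  using assms by (simp add: m_assoc[symmetric]) (simp add: m_assoc)

lemma conj_in_centralizer_conj_iff:
  assumes "g \<in> carrier G" and "x \<in> carrier G" and "u \<in> carrier G"
  shows "g \<otimes> u \<otimes> inv g \<in> centralizer G (g \<otimes> x \<otimes> inv g) \<longleftrightarrow> u \<in> centralizer G x"
  using assms by (simp add: centralizer_def conj_mult_conj)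

end

text \<open>On a non-central conjugacy class all elements have the same centralizer
  (lemma conj_class_noncentral), so the choice made by SOME is immaterial there.\<close>

definition class_centralizer :: "('a, 'b) monoid_scheme \<Rightarrow> 'a set \<Rightarrow> 'a set" where
  "class_centralizer G X = centralizer G (SOME x. x \<in> X)"

locale center_index_p_squared = group G for G (structure) +
  fixes p m :: nat
  assumes finite_carrier: "finite (carrier G)" and prime_p: "prime p"
    and card_carrier: "card (carrier G) = p ^ m"
    and card_center: "card (grp_center G) = p ^ (m - 2)"
begin

lemma p_gt_1: "p > 1"
  using prime_p prime_gt_1_nat by blast

lemma finite_center: "finite (grp_center G)"
  using finite_carrier grp_center_subset_carrier finite_subset by blast

lemma card_subgroup_prime_power:
  assumes "subgroup H G"
  obtains j where "j \<le> m" and "card H = p ^ j"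
proof -
  have "card H dvd p ^ m"
    using lagrange[OF assms] card_carrier by (metis dvd_triv_right order_def)
  then show thesis
    using that divides_primepow_nat[OF prime_p] by blast
qed

lemma
  assumes "subgroup H G" and "grp_center G \<subset> H" and "H \<subset> carrier G"
  shows card_intermediate_subgroup: "card H = p ^ (m - 1)"
    and two_le_exponent: "m \<ge> 2"
proof -
  obtain j where j: "j \<le> m" "card H = p ^ j"
    using card_subgroup_prime_power[OF assms(1)] .
  have "finite H"
    using assms(3) finite_carrier finite_subset by blast
  then have "p ^ (m - 2) < p ^ j" and "p ^ j < p ^ m"
    using psubset_card_mono[OF _ assms(2)] psubset_card_mono[OF finite_carrier assms(3)]
      card_center card_carrier j by simp_all
  then have "m - 2 < j" and "j < m"
    using p_gt_1 by (simp_all add: power_strict_increasing_iff)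
  then have "j = m - 1" and "m \<ge> 2"
    by arith+
  with j show "card H = p ^ (m - 1)" and "m \<ge> 2"
    by simp_all
qed

context
  fixes x assumes x: "x \<in> carrier G" "x \<notin> grp_center G"
begin

lemma center_psubset_centralizer: "grp_center G \<subset> centralizer G x"
  using grp_center_subset_centralizer self_in_centralizer x by blast

lemma centralizer_psubset_carrier: "centralizer G x \<subset> carrier G"
proof -
  obtain g where "g \<in> carrier G" and "g \<notin> centralizer G x"
    using x by (auto simp: grp_center_def centralizer_def)
  then show ?thesis
    using centralizer_subset_carrier by blast
qed

lemma card_centralizer: "card (centralizer G x) = p ^ (m - 1)"
  using card_intermediate_subgroup[OF subgroup_centralizer] x
    center_psubset_centralizer centralizer_psubset_carrier by blast

lemma two_le_exponent_if_noncentral: "m \<ge> 2"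
  using two_le_exponent[OF subgroup_centralizer] x
    center_psubset_centralizer centralizer_psubset_carrier by blast

end

lemma centralizer_eq_if_commute:
  assumes x: "x \<in> carrier G" "x \<notin> grp_center G" and y: "y \<in> carrier G" "y \<notin> grp_center G"
    and xy: "x \<otimes> y = y \<otimes> x"
  shows "centralizer G x = centralizer G y"
proof -
  let ?H = "centralizer G x \<inter> centralizer G y"
  have "subgroup ?H G"
    using subgroups_Inter_pair subgroup_centralizer x y by blast
  moreover have "grp_center G \<subset> ?H"
    using grp_center_subset_centralizer self_in_centralizer x y xy by (auto simp: centralizer_def)
  moreover have "?H \<subset> carrier G"
    using centralizer_psubset_carrier[OF x] by blast
  ultimately have "card ?H = p ^ (m - 1)"
    by (rule card_intermediate_subgroup)
  moreover have "finite (centralizer G x)" and "finite (centralizer G y)"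
    using finite_carrier centralizer_subset_carrier finite_subset by blast+
  ultimately have "?H = centralizer G x" and "?H = centralizer G y"
    using card_centralizer x y by (metis Int_lower1 Int_lower2 card_subset_eq)+
  then show ?thesis
    by simp
qed

lemma centralizers_inter_subset_center:
  assumes x: "x \<in> carrier G" "x \<notin> grp_center G" and y: "y \<in> carrier G" "y \<notin> grp_center G"
    and ne: "centralizer G x \<noteq> centralizer G y"
  shows "centralizer G x \<inter> centralizer G y \<subseteq> grp_center G"
proof
  fix w assume w: "w \<in> centralizer G x \<inter> centralizer G y"
  show "w \<in> grp_center G"
  proof (rule ccontr)
    assume "w \<notin> grp_center G"
    moreover have "w \<in> carrier G" "w \<otimes> x = x \<otimes> w" "w \<otimes> y = y \<otimes> w"
      using w by (auto simp: centralizer_def)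
    ultimately have "centralizer G w = centralizer G x" and "centralizer G w = centralizer G y"
      using centralizer_eq_if_commute x y by blast+
    with ne show False
      by simp
  qed
qed

lemma set_mult_centralizers:
  assumes x: "x \<in> carrier G" "x \<notin> grp_center G" and y: "y \<in> carrier G" "y \<notin> grp_center G"
    and ne: "centralizer G x \<noteq> centralizer G y"
  shows "centralizer G x <#> centralizer G y = carrier G"
proof -
  let ?A = "centralizer G x" and ?B = "centralizer G y"
  have m: "m - 1 + (m - 1) = m + (m - 2)"
    using two_le_exponent_if_noncentral[OF x] by simp
  have "card (?A \<inter> ?B) \<le> p ^ (m - 2)"
    using card_mono[OF finite_center centralizers_inter_subset_center[OF x y ne]] card_center by simp
  then have "p ^ (m - 1) * p ^ (m - 1) \<le> card (?A <#> ?B) * p ^ (m - 2)"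
    using card_subgroups_mult_le[OF subgroup_centralizer subgroup_centralizer finite_carrier, of x y]
      card_centralizer[OF x] card_centralizer[OF y] x y
    by (metis mult_le_mono2 order_trans)
  then have "p ^ m * p ^ (m - 2) \<le> card (?A <#> ?B) * p ^ (m - 2)"
    by (simp only: power_add[symmetric] m)
  then have "card (carrier G) \<le> card (?A <#> ?B)"
    using p_gt_1 card_carrier by simp
  moreover have "?A <#> ?B \<subseteq> carrier G"
    using centralizer_subset_carrier by (auto simp: set_mult_def)
  ultimately show ?thesis
    using card_seteq[OF finite_carrier] by blast
qed

lemma conj_in_centralizer:
  assumes x: "x \<in> carrier G" "x \<notin> grp_center G" and g: "g \<in> carrier G"
  shows "g \<otimes> x \<otimes> inv g \<in> centralizer G x"
  \<comment> \<open>Otherwise C(x) C(y) = G for y = g x g\<inverse>; writing g\<inverse> = a b with a \<in> C(x), b \<in> C(y)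
    and conjugating b back into C(x) puts g\<inverse>, hence g, into C(x), so y = x.\<close>
proof (rule ccontr)
  define y where "y = g \<otimes> x \<otimes> inv g"
  assume "g \<otimes> x \<otimes> inv g \<notin> centralizer G x"
  then have y_notin: "y \<notin> centralizer G x"
    by (simp add: y_def)
  have y: "y \<in> carrier G" "y \<notin> grp_center G"
    using x g y_notin grp_center_subset_centralizer[OF x(1)] by (auto simp: y_def)
  have "centralizer G x \<noteq> centralizer G y"
    using self_in_centralizer[OF y(1)] y_notin by blast
  then have "inv g \<in> centralizer G x <#> centralizer G y"
    using set_mult_centralizers[OF x y] g by simp
  then obtain a b where a: "a \<in> centralizer G x" and b: "b \<in> centralizer G y"
    and ginv: "inv g = a \<otimes> b"
    by (auto simp: set_mult_def)
  have a_carrier: "a \<in> carrier G" and b_carrier: "b \<in> carrier G"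
    using a b centralizer_subset_carrier by auto
  define u where "u = inv g \<otimes> b \<otimes> g"
  have u: "u \<in> carrier G"
    using g b_carrier by (simp add: u_def)
  have "b = g \<otimes> u \<otimes> inv g"
    using g b_carrier by (simp add: u_def m_assoc[symmetric]) (simp add: m_assoc)
  with b have "u \<in> centralizer G x"
    using conj_in_centralizer_conj_iff[OF g x(1) u] by (simp add: y_def)
  moreover have "inv g = u \<otimes> a"
  proof -
    have "b = inv a \<otimes> inv g"
      using g a_carrier b_carrier ginv by (simp add: inv_solve_left)
    then have "u = inv g \<otimes> inv a"
      using g a_carrier by (simp add: u_def m_assoc)
    then show ?thesis
      using g a_carrier by (simp add: m_assoc)
  qed
  ultimately have "inv g \<in> centralizer G x"
    using subgroup.m_closed[OF subgroup_centralizer[OF x(1)]] a by simp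
  then have "g \<in> centralizer G x"
    using subgroup.m_inv_closed[OF subgroup_centralizer[OF x(1)]] g by fastforce
  then have "y = x"
    using x g by (simp add: y_def centralizer_def m_assoc)
  with y_notin self_in_centralizer[OF x(1)] show False
    by simp
qed

lemma conj_class_noncentral:
  assumes x: "x \<in> carrier G" "x \<notin> grp_center G" and y: "y \<in> conj_class G x"
  shows "y \<in> carrier G" and "y \<notin> grp_center G" and "centralizer G y = centralizer G x"
proof -
  obtain g where g: "g \<in> carrier G" and y_eq: "y = g \<otimes> x \<otimes> inv g"
    using y by (auto simp: conj_class_def)
  show y_carrier: "y \<in> carrier G"
    using g x by (simp add: y_eq)
  show y_noncentral: "y \<notin> grp_center G"
  proof
    assume "y \<in> grp_center G"
    then have "y \<otimes> g = g \<otimes> y"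
      using g by (simp add: grp_center_def)
    then have "y = x"
      using g x by (simp add: y_eq m_assoc)
    with x \<open>y \<in> grp_center G\<close> show False
      by simp
  qed
  have "y \<otimes> x = x \<otimes> y"
    using conj_in_centralizer[OF x g] by (simp add: y_eq centralizer_def)
  then show "centralizer G y = centralizer G x"
    using centralizer_eq_if_commute[OF y_carrier y_noncentral x] by simp
qed

lemma card_conj_class:
  assumes x: "x \<in> carrier G" "x \<notin> grp_center G"
  shows "card (conj_class G x) = p"
proof -
  have "m = Suc (m - 1)"
    using two_le_exponent_if_noncentral[OF x] by simp
  then have "card (conj_class G x) * p ^ (m - 1) = p * p ^ (m - 1)"
    using card_conj_class_mult_card_centralizer[OF x(1)] card_centralizer[OF x] card_carrier
    by (metis order_def power_Suc)
  then show ?thesis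
    using p_gt_1 by simp
qed

lemma class_centralizer_conj_class:
  assumes x: "x \<in> carrier G" "x \<notin> grp_center G"
  shows "class_centralizer G (conj_class G x) = centralizer G x"
  unfolding class_centralizer_def
  by (rule conj_class_noncentral(3)[OF x someI]) (rule conj_class_self[OF x(1)])

lemma finite_nccc_vertices: "finite (nccc_vertices G)"
proof -
  have "nccc_vertices G \<subseteq> Pow (carrier G)"
    using conj_class_subset_carrier by (auto simp: nccc_vertices_def)
  then show ?thesis
    by (rule finite_subset) (simp add: finite_carrier)
qed

lemma nccc_adj_conj_class_iff:
  assumes x: "x \<in> carrier G" "x \<notin> grp_center G" and y: "y \<in> carrier G" "y \<notin> grp_center G"
  shows "nccc_adj G (conj_class G x) (conj_class G y) \<longleftrightarrow> centralizer G x \<noteq> centralizer G y"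
proof
  assume adj: "nccc_adj G (conj_class G x) (conj_class G y)"
  show "centralizer G x \<noteq> centralizer G y"
  proof
    assume "centralizer G x = centralizer G y"
    then have "y \<in> centralizer G x"
      using self_in_centralizer[OF y(1)] by simp
    then have "x \<otimes> y = y \<otimes> x"
      by (simp add: centralizer_def)
    moreover have "x \<in> conj_class G x" and "y \<in> conj_class G y"
      using conj_class_self x y by simp_all
    ultimately show False
      using adj by (auto simp: nccc_adj_def)
  qed
next
  assume ne: "centralizer G x \<noteq> centralizer G y"
  then have "class_centralizer G (conj_class G x) \<noteq> class_centralizer G (conj_class G y)"
    using class_centralizer_conj_class x y by simp
  then have "conj_class G x \<noteq> conj_class G y"
    by auto
  moreover have "x' \<otimes> y' \<noteq> y' \<otimes> x'" if x': "x' \<in> conj_class G x" and y': "y' \<in> conj_class G y" for x' y'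
  proof
    assume "x' \<otimes> y' = y' \<otimes> x'"
    then have "centralizer G x' = centralizer G y'"
      using centralizer_eq_if_commute conj_class_noncentral(1,2)[OF x x'] conj_class_noncentral(1,2)[OF y y']
      by blast
    with ne show False
      using conj_class_noncentral(3)[OF x x'] conj_class_noncentral(3)[OF y y'] by simp
  qed
  ultimately show "nccc_adj G (conj_class G x) (conj_class G y)"
    by (simp add: nccc_adj_def)
qed


lemma Union_classes_with_centralizer:
  assumes x: "x \<in> carrier G" "x \<notin> grp_center G"
  shows "\<Union>{X \<in> nccc_vertices G. class_centralizer G X = centralizer G x}
    = centralizer G x - grp_center G"
proof (intro equalityI subsetI)
  fix z assume "z \<in> \<Union>{X \<in> nccc_vertices G. class_centralizer G X = centralizer G x}"
  then obtain X where X: "X \<in> nccc_vertices G" "class_centralizer G X = centralizer G x"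
    and "z \<in> X"
    by blast
  from X(1) obtain w where w: "w \<in> carrier G" "w \<notin> grp_center G" and "X = conj_class G w"
    by (rule nccc_vertexE)
  with X(2) \<open>z \<in> X\<close> have "z \<in> conj_class G w" and "centralizer G w = centralizer G x"
    using class_centralizer_conj_class[OF w] by simp_all
  with conj_class_noncentral[OF w] show "z \<in> centralizer G x - grp_center G"
    using self_in_centralizer by blast
next
  fix z assume z: "z \<in> centralizer G x - grp_center G"
  then have z_carrier: "z \<in> carrier G" and "z \<otimes> x = x \<otimes> z"
    by (auto simp: centralizer_def)
  then have "centralizer G z = centralizer G x"
    using centralizer_eq_if_commute[OF z_carrier _ x] z by blast
  then have "conj_class G z \<in> {X \<in> nccc_vertices G. class_centralizer G X = centralizer G x}"
    using class_centralizer_conj_class[OF z_carrier] z z_carrier by (auto simp: nccc_vertices_def)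
  with conj_class_self[OF z_carrier]
  show "z \<in> \<Union>{X \<in> nccc_vertices G. class_centralizer G X = centralizer G x}"
    by blast
qed

lemma card_centralizer_diff_center:
  assumes x: "x \<in> carrier G" "x \<notin> grp_center G"
  shows "card (centralizer G x - grp_center G) = (p - 1) * p ^ (m - 2)"
proof -
  have "m - 1 = Suc (m - 2)"
    using two_le_exponent_if_noncentral[OF x] by simp
  then show ?thesis
    using card_Diff_subset[OF finite_center grp_center_subset_centralizer[OF x(1)]]
      card_centralizer[OF x] card_center
    by (simp add: diff_mult_distrib)
qed

lemma card_classes_with_centralizer_mult_p:
  assumes x: "x \<in> carrier G" "x \<notin> grp_center G"
  shows "card {X \<in> nccc_vertices G. class_centralizer G X = centralizer G x} * p
    = (p - 1) * p ^ (m - 2)"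
proof -
  let ?F = "{X \<in> nccc_vertices G. class_centralizer G X = centralizer G x}"
  have "finite X" and "card X = p" if "X \<in> ?F" for X
  proof -
    from that obtain y where "y \<in> carrier G" "y \<notin> grp_center G" "X = conj_class G y"
      by (auto elim: nccc_vertexE)
    then show "finite X" and "card X = p"
      using finite_subset[OF conj_class_subset_carrier finite_carrier] card_conj_class by simp_all
  qed
  moreover have "pairwise disjnt ?F"
    by (rule pairwise_subset[OF pairwise_disjnt_nccc_vertices]) auto
  ultimately show ?thesis
    using card_Union_disjoint[of ?F] Union_classes_with_centralizer[OF x] card_centralizer_diff_center[OF x]
    by simp
qed

lemma three_le_exponent:
  assumes x: "x \<in> carrier G" "x \<notin> grp_center G"
  shows "m \<ge> 3"
proof (rule ccontr)
  assume "\<not> m \<ge> 3"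
  with two_le_exponent_if_noncentral[OF x] have "m = 2"
    by simp
  with card_classes_with_centralizer_mult_p[OF x]
  have "card {X \<in> nccc_vertices G. class_centralizer G X = centralizer G x} * p = p - 1"
    by simp
  then have "p dvd p - 1"
    by (metis dvd_triv_right)
  with p_gt_1 show False
    using dvd_imp_le[of p "p - 1"] by simp
qed

lemma card_classes_with_centralizer:
  assumes x: "x \<in> carrier G" "x \<notin> grp_center G"
  shows "card {X \<in> nccc_vertices G. class_centralizer G X = centralizer G x} = (p - 1) * p ^ (m - 3)"
proof -
  have "m - 2 = Suc (m - 3)"
    using three_le_exponent[OF x] by simp
  then show ?thesis
    using card_classes_with_centralizer_mult_p[OF x] p_gt_1 by (simp add: ac_simps)
qed

lemma class_centralizer_subset_carrier: "class_centralizer G X \<subseteq> carrier G"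
  by (simp add: class_centralizer_def centralizer_subset_carrier)

lemma class_centralizer_imageE:
  assumes "A \<in> class_centralizer G ` nccc_vertices G"
  obtains y where "y \<in> carrier G" and "y \<notin> grp_center G" and "A = centralizer G y"
proof -
  from assms obtain X where X: "X \<in> nccc_vertices G" and A: "A = class_centralizer G X"
    by blast
  from X obtain y where "y \<in> carrier G" and "y \<notin> grp_center G" and "X = conj_class G y"
    by (rule nccc_vertexE)
  with A that show thesis
    using class_centralizer_conj_class by simp
qed

lemma Union_class_centralizers:
  "carrier G - grp_center G = (\<Union>A\<in>class_centralizer G ` nccc_vertices G. A - grp_center G)"
proof (intro equalityI subsetI)
  fix z assume z: "z \<in> carrier G - grp_center G"
  then have "centralizer G z \<in> class_centralizer G ` nccc_vertices G"
    using class_centralizer_conj_class[of z] by (auto simp: nccc_vertices_def)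
  with z show "z \<in> (\<Union>A\<in>class_centralizer G ` nccc_vertices G. A - grp_center G)"
    using self_in_centralizer by blast
qed (use class_centralizer_subset_carrier in blast)

lemma class_centralizers_disjoint:
  assumes A: "A \<in> class_centralizer G ` nccc_vertices G" and B: "B \<in> class_centralizer G ` nccc_vertices G"
    and "A \<noteq> B"
  shows "(A - grp_center G) \<inter> (B - grp_center G) = {}"
proof -
  from A obtain y where y: "y \<in> carrier G" "y \<notin> grp_center G" "A = centralizer G y"
    by (rule class_centralizer_imageE)
  from B obtain z where z: "z \<in> carrier G" "z \<notin> grp_center G" "B = centralizer G z"
    by (rule class_centralizer_imageE)
  show ?thesis
    using centralizers_inter_subset_center[OF y(1,2) z(1,2)] \<open>A \<noteq> B\<close> y(3) z(3) by blast
qed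

lemma card_class_centralizers:
  assumes x: "x \<in> carrier G" "x \<notin> grp_center G"
  shows "card (class_centralizer G ` nccc_vertices G) = p + 1"
proof -
  let ?P = "class_centralizer G ` nccc_vertices G"
  have "m = Suc (Suc (m - 2))"
    using two_le_exponent_if_noncentral[OF x] by simp
  then have "card (carrier G) = p * p * p ^ (m - 2)"
    using card_carrier by (metis mult.assoc power_Suc)
  then have "(p * p - 1) * p ^ (m - 2) = card (carrier G - grp_center G)"
    using card_Diff_subset[OF finite_center grp_center_subset_carrier] card_center
    by (simp add: diff_mult_distrib)
  also have "\<dots> = (\<Sum>A\<in>?P. card (A - grp_center G))"
    unfolding Union_class_centralizers
  proof (rule card_UN_disjoint)
    show "finite ?P"
      using finite_nccc_vertices by simp
    show "\<forall>A\<in>?P. finite (A - grp_center G)"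
      using finite_subset[OF class_centralizer_subset_carrier finite_carrier] by blast
  qed (use class_centralizers_disjoint in blast)
  also have "\<dots> = (\<Sum>A\<in>?P. (p - 1) * p ^ (m - 2))"
  proof (rule sum.cong[OF refl])
    fix A assume "A \<in> ?P"
    then obtain y where "y \<in> carrier G" "y \<notin> grp_center G" "A = centralizer G y"
      by (rule class_centralizer_imageE)
    then show "card (A - grp_center G) = (p - 1) * p ^ (m - 2)"
      using card_centralizer_diff_center by simp
  qed
  finally have "card ?P * ((p - 1) * p ^ (m - 2)) = (p + 1) * ((p - 1) * p ^ (m - 2))"
    by (simp add: algebra_simps diff_mult_distrib2)
  moreover have "(p - 1) * p ^ (m - 2) \<noteq> 0"
    using p_gt_1 by simp
  ultimately show ?thesis
    by (metis mult_right_cancel)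
qed

theorem nccc_graph_complete_multipartite:
  assumes x: "x \<in> carrier G" "x \<notin> grp_center G"
  shows "complete_multipartite_graph (nccc_vertices G) (nccc_adj G) (class_centralizer G)
           ((p - 1) * p ^ (m - 3))"
proof
  show "finite (nccc_vertices G)"
    by (rule finite_nccc_vertices)
next
  fix X Y assume "X \<in> nccc_vertices G" "Y \<in> nccc_vertices G"
  then show "nccc_adj G X Y \<longleftrightarrow> class_centralizer G X \<noteq> class_centralizer G Y"
    using nccc_adj_conj_class_iff class_centralizer_conj_class by (auto elim!: nccc_vertexE)
next
  fix X assume "X \<in> nccc_vertices G"
  then show "card {Y \<in> nccc_vertices G. class_centralizer G Y = class_centralizer G X}
      = (p - 1) * p ^ (m - 3)"
    using card_classes_with_centralizer class_centralizer_conj_class by (auto elim!: nccc_vertexE)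
qed

end

theorem corollary2p4:
  fixes G :: "('a, 'b) monoid_scheme" and p m :: nat
  assumes "group G" and "finite (carrier G)" and "prime p"
    and "card (carrier G) = p ^ m"
    and "\<not> comm_group G"
    and "card (grp_center G) = p ^ (m - 2)"
  defines "V \<equiv> nccc_vertices G" and "E \<equiv> nccc_adj G"
  shows "mat_spec (adj_mat V E) =
           replicate_mset ((p + 1) * ((p - 1) * p ^ (m - 3) - 1)) 0
         + replicate_mset p (- (real (p - 1) * real p ^ (m - 3)))
         + {# real (p - 1) * real p ^ (m - 2) #} \<and>
         mat_spec (lap_mat V E) =
           {# 0 #}
         + replicate_mset ((p + 1) * ((p - 1) * p ^ (m - 3) - 1)) (real (p - 1) * real p ^ (m - 2))
         + replicate_mset p ((real p ^ 2 - 1) * real p ^ (m - 3)) \<and>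
         mat_spec (slap_mat V E) =
           replicate_mset ((p + 1) * ((p - 1) * p ^ (m - 3) - 1)) (real (p - 1) * real p ^ (m - 2))
         + replicate_mset p (real (p - 1) ^ 2 * real p ^ (m - 3))
         + {# 2 * real (p - 1) * real p ^ (m - 2) #} \<and>
         graph_energy V E = 2 * real (p - 1) * real p ^ (m - 2) \<and>
         lap_energy V E = 2 * real (p - 1) * real p ^ (m - 2) \<and>
         slap_energy V E = 2 * real (p - 1) * real p ^ (m - 2)"
proof -
  interpret center_index_p_squared G p m
    using assms(1-4,6) by (simp add: center_index_p_squared_def center_index_p_squared_axioms_def)
  obtain x where x: "x \<in> carrier G" "x \<notin> grp_center G"
    using noncentral_elementE[OF assms(5)] .
  define n where "n = (p - 1) * p ^ (m - 3)"
  interpret nccc: complete_multipartite_graph V E "class_centralizer G" n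
    unfolding V_def E_def n_def by (rule nccc_graph_complete_multipartite[OF x])
  have k: "card (class_centralizer G ` V) = p + 1" "p + 1 \<ge> 2" and "n \<ge> 1"
    using card_class_centralizers[OF x] p_gt_1 by (simp_all add: V_def n_def)
  have m: "m - 2 = Suc (m - 3)"
    using three_le_exponent[OF x] by simp
  have n_real: "real n = real (p - 1) * real p ^ (m - 3)"
    by (simp add: n_def)
  have nat_eqs: "p + 1 - 1 = p" "p + 1 - 2 = p - 1"
    "(p + 1) * (n - 1) = (p + 1) * ((p - 1) * p ^ (m - 3) - 1)"
    by (simp_all add: n_def)
  have top: "real (p * n) = real (p - 1) * real p ^ (m - 2)"
    and top2: "2 * real (p * n) = 2 * real (p - 1) * real p ^ (m - 2)"
    using m by (simp_all add: n_real mult_ac)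
  have "real ((p + 1) * n) = (real p ^ 2 - 1) * real p ^ (m - 3)"
    and "real ((p - 1) * n) = real (p - 1) ^ 2 * real p ^ (m - 3)"
    using p_gt_1 by (simp_all add: n_real of_nat_diff power2_eq_square algebra_simps)
  note eqs = top this n_real
  \<comment> \<open>top2 is unfolded first, so that 2 * real (p * n) is rewritten as a whole\<close>
  show ?thesis
    using nccc.spectra[OF k \<open>n \<ge> 1\<close>, unfolded nat_eqs, unfolded top2, unfolded eqs]
      nccc.energies[OF k \<open>n \<ge> 1\<close>, unfolded nat_eqs, unfolded top2]
    by simp
qed

end
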